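(* There is no $(4,1,p)$-QRA coding with $p>1/2$. That is, there do not exist a real number $p>1/2$, one-qubit density operators $\rho_x$ (positive semidefinite $2\times 2$ complex matrices of trace $1$) for $x\in\{0,1\}^4$, and POVMs $\{E^i_0,E^i_1\}$ for $i\in\{1,2,3,4\}$ such that $\mathrm{Tr}(E^i_{x_i}\rho_x)\ge p$ for all $x\in\{0,1\}^4$ and all $i\in\{1,2,3,4\}$, where $x_i$ denotes the $i$-th bit of $x$.
   Context: An $(n,m,p)$-quantum random access (QRA) coding is a map assigning to each $n$-bit string $x\in\{0,1\}^n$ an $m$-qubit state $\rho_x$ (a positive semidefinite trace-one operator on $\mathbb{C}^{2^m}$) such that for every $i\in\{1,\dots,n\}$ there is a POVM $E^i=\{E^i_0,E^i_1\}$ (i.e. $E^i_0,E^i_1$ are positive semidefinite Hermitian operators on $\mathbb{C}^{2^m}$ with $E^i_0+E^i_1=I$) satisfying $\mathrm{Tr}(E^i_{x_i}\rho_x)\ge p$ for all $x\in\{0,1\}^n$, where $x_i$ is the $i$-th bit of $x$. *)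

theory Defs
  imports "HOL-Analysis.Analysis"
begin

definition trace2 :: "complex^2^2 \<Rightarrow> complex" where
  "trace2 A = (\<Sum>i\<in>UNIV. A $ i $ i)"

definition hermitian2 :: "complex^2^2 \<Rightarrow> bool" where
  "hermitian2 A \<longleftrightarrow> (\<forall>i j. A $ i $ j = cnj (A $ j $ i))"

definition psd2 :: "complex^2^2 \<Rightarrow> bool" where
  "psd2 A \<longleftrightarrow> hermitian2 A \<and>
     (\<forall>v::complex^2. (\<Sum>i\<in>UNIV. \<Sum>j\<in>UNIV. cnj (v $ i) * A $ i $ j * v $ j) \<in> \<real> \<and>
                      0 \<le> Re (\<Sum>i\<in>UNIV. \<Sum>j\<in>UNIV. cnj (v $ i) * A $ i $ j * v $ j))"

definition density2 :: "complex^2^2 \<Rightarrow> bool" where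
  "density2 \<rho> \<longleftrightarrow> psd2 \<rho> \<and> trace2 \<rho> = 1"

definition povm2 :: "complex^2^2 \<Rightarrow> complex^2^2 \<Rightarrow> bool" where
  "povm2 E0 E1 \<longleftrightarrow> psd2 E0 \<and> psd2 E1 \<and> E0 + E1 = mat 1"

definition bitstrings4 :: "(nat \<Rightarrow> bool) set" where
  "bitstrings4 = {x. \<forall>i. i \<notin> {1..4} \<longrightarrow> x i = False}"

end

theory Submission imports Defs begin

text \<open>Writing a Hermitian 2x2 matrix as \<open>a\<^sub>0 I + a \<cdot> \<sigma>\<close> in the Pauli basis, the outcome
probability \<open>Tr(F \<rho>)\<close> is an affine function of the Bloch vector of \<open>\<rho>\<close> whose linear part is a
vector in \<open>\<real>\<^sup>3\<close>. The linear parts of the four operators \<open>E\<^sup>i\<^sub>0\<close> therefore satisfy a nontrivial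
relation \<open>\<Sum> l\<^sub>i w\<^sub>i = 0\<close>, so \<open>\<Sum> l\<^sub>i Tr(E\<^sup>i\<^sub>0 \<rho>\<^sub>x)\<close> does not depend on \<open>x\<close>. But each term
\<open>l\<^sub>i (Tr(E\<^sup>i\<^sub>0 \<rho>\<^sub>x) - 1/2)\<close> has absolute value at least \<open>(p - 1/2) |l\<^sub>i|\<close> and a sign fixed
by \<open>x\<^sub>i\<close>, so encoding \<open>x\<^sub>i = [l\<^sub>i > 0]\<close> makes the sum smaller than \<open>\<Sum> l\<^sub>i / 2\<close> and
\<open>x\<^sub>i = [l\<^sub>i < 0]\<close> makes it larger.\<close>

lemma exists_nontrivial_linear_relation:
  fixes v :: "'i \<Rightarrow> 'a::euclidean_space"
  assumes "finite I" and "DIM('a) < card I"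
  obtains c where "\<exists>i\<in>I. c i \<noteq> 0" and "(\<Sum>i\<in>I. c i *\<^sub>R v i) = 0"
proof (cases "inj_on v I")
  case True
  have "dependent (v ` I)"
    using assms True by (intro dependent_biggerset) (simp add: card_image)
  then obtain u where "\<exists>w\<in>v ` I. u w \<noteq> 0" and "(\<Sum>w\<in>v ` I. u w *\<^sub>R w) = 0"
    using assms(1) by (auto simp: dependent_finite)
  with True show thesis
    by (intro that[of "u \<circ> v"]) (auto simp: sum.reindex)
next
  case False
  then obtain i j where ij: "i \<in> I" "j \<in> I" "i \<noteq> j" "v i = v j"
    by (auto simp: inj_on_def)
  define c where "c k = (if k = i then 1 else if k = j then -1 else 0 :: real)" for k
  have "(\<Sum>k\<in>I. c k *\<^sub>R v k) = (\<Sum>k\<in>I. (if k = i then v i else 0) - (if k = j then v j else 0))"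
    using ij by (intro sum.cong) (auto simp: c_def)
  also have "\<dots> = 0"
    using ij assms(1) by (simp add: sum_subtractf)
  finally show thesis
    using ij by (intro that[of c]) (auto simp: c_def)
qed

lemma hermitian2_entries:
  assumes "hermitian2 A"
  shows "A$2$1 = cnj (A$1$2)" and "Im (A$1$1) = 0" and "Im (A$2$2) = 0"
proof -
  have "A$2$1 = cnj (A$1$2)" "A$1$1 = cnj (A$1$1)" "A$2$2 = cnj (A$2$2)"
    using assms unfolding hermitian2_def by blast+
  then show "A$2$1 = cnj (A$1$2)" "Im (A$1$1) = 0" "Im (A$2$2) = 0"
    by (simp_all add: complex_eq_iff)
qed

text \<open>For Hermitian \<open>A = a\<^sub>0 I + a\<^sub>1 \<sigma>\<^sub>x + a\<^sub>2 \<sigma>\<^sub>y + a\<^sub>3 \<sigma>\<^sub>z\<close> this is \<open>(a\<^sub>1, a\<^sub>2, a\<^sub>3)\<close>;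
  the Bloch vector of a state \<open>\<rho>\<close> is \<open>2 * pauli_vector \<rho>\<close>.\<close>
definition pauli_vector :: "complex^2^2 \<Rightarrow> real^3" where
  "pauli_vector A = vector [Re (A$1$2), - Im (A$1$2), Re (A$1$1 - A$2$2) / 2]"

lemma Re_trace2_mult_hermitian2:
  assumes "hermitian2 A" and "hermitian2 B"
  shows "Re (trace2 (A ** B))
           = Re (trace2 A) * Re (trace2 B) / 2 + 2 * (pauli_vector A \<bullet> pauli_vector B)"
  using hermitian2_entries[OF assms(1)] hermitian2_entries[OF assms(2)]
  unfolding trace2_def matrix_matrix_mult_def pauli_vector_def inner_vec_def
  by (simp add: sum_2 sum_3 field_simps)

lemma trace2_povm_complement:
  assumes "E0 + E1 = mat 1" and "trace2 \<rho> = 1"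
  shows "trace2 (E1 ** \<rho>) = 1 - trace2 (E0 ** \<rho>)"
proof -
  have "trace2 (E0 ** \<rho>) + trace2 (E1 ** \<rho>) = trace2 ((E0 + E1) ** \<rho>)"
    unfolding trace2_def matrix_matrix_mult_def by (simp add: sum_2 algebra_simps)
  with assms show ?thesis
    by (simp add: algebra_simps)
qed

lemma weighted_bias_le:
  fixes l g p :: real
  assumes "0 < l \<Longrightarrow> g \<le> 1 - p" and "l < 0 \<Longrightarrow> p \<le> g"
  shows "l * (g - 1/2) \<le> - ((p - 1/2) * \<bar>l\<bar>)"
proof (cases "0 < l")
  case True
  then have "l * (g - 1/2) \<le> l * (1/2 - p)"
    using assms(1) by (intro mult_left_mono) auto
  with True show ?thesis by (simp add: algebra_simps)
next
  case False
  then have "l * (g - 1/2) \<le> l * (p - 1/2)"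
    using assms(2) by (cases "l = 0") (auto intro: mult_left_mono_neg)
  with False show ?thesis by (simp add: algebra_simps)
qed

definition bitstrings_on :: "'i set \<Rightarrow> ('i \<Rightarrow> bool) set" where
  "bitstrings_on I = {x. \<forall>i. i \<notin> I \<longrightarrow> \<not> x i}"

lemma bitstrings4_eq_bitstrings_on: "bitstrings4 = bitstrings_on {1..4}"
  by (simp add: bitstrings4_def bitstrings_on_def)

lemma weighted_decoding_sum_not_constant:
  fixes g :: "('i \<Rightarrow> bool) \<Rightarrow> 'i \<Rightarrow> real"
  assumes "finite I" and "1/2 < p" and "\<exists>i\<in>I. l i \<noteq> 0"
    and decode_False: "\<And>x i. x \<in> bitstrings_on I \<Longrightarrow> i \<in> I \<Longrightarrow> \<not> x i \<Longrightarrow> p \<le> g x i"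
    and decode_True: "\<And>x i. x \<in> bitstrings_on I \<Longrightarrow> i \<in> I \<Longrightarrow> x i \<Longrightarrow> g x i \<le> 1 - p"
    and weighted_sum: "\<And>x. x \<in> bitstrings_on I \<Longrightarrow> (\<Sum>i\<in>I. l i * g x i) = D"
  shows False
proof -
  define bound where "bound = (p - 1/2) * (\<Sum>i\<in>I. \<bar>l i\<bar>)"
  have "0 < (\<Sum>i\<in>I. \<bar>l i\<bar>)"
    using assms(1,3) by (auto intro: sum_pos2)
  then have "0 < bound"
    using assms(2) by (simp add: bound_def)
  have centered: "(\<Sum>i\<in>I. l i * (g x i - 1/2)) = D - (\<Sum>i\<in>I. l i) / 2"
    if "x \<in> bitstrings_on I" for x
    using weighted_sum[OF that] by (simp add: algebra_simps sum_subtractf sum_divide_distrib)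
  define x_pos where "x_pos i = (i \<in> I \<and> 0 < l i)" for i
  define x_neg where "x_neg i = (i \<in> I \<and> l i < 0)" for i
  have "x_pos \<in> bitstrings_on I" "x_neg \<in> bitstrings_on I"
    by (auto simp: bitstrings_on_def x_pos_def x_neg_def)
  have "D - (\<Sum>i\<in>I. l i) / 2 = (\<Sum>i\<in>I. l i * (g x_pos i - 1/2))"
    using centered[OF \<open>x_pos \<in> bitstrings_on I\<close>] by simp
  also have "\<dots> \<le> (\<Sum>i\<in>I. - ((p - 1/2) * \<bar>l i\<bar>))"
    using decode_False[OF \<open>x_pos \<in> bitstrings_on I\<close>] decode_True[OF \<open>x_pos \<in> bitstrings_on I\<close>]
    by (intro sum_mono weighted_bias_le) (auto simp: x_pos_def)
  also have "\<dots> = - bound"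
    by (simp add: bound_def sum_distrib_left sum_negf)
  finally have upper: "D - (\<Sum>i\<in>I. l i) / 2 \<le> - bound" .
  have "- (D - (\<Sum>i\<in>I. l i) / 2) = (\<Sum>i\<in>I. - l i * (g x_neg i - 1/2))"
    using centered[OF \<open>x_neg \<in> bitstrings_on I\<close>] by (simp add: sum_negf)
  also have "\<dots> \<le> (\<Sum>i\<in>I. - ((p - 1/2) * \<bar>- l i\<bar>))"
    using decode_False[OF \<open>x_neg \<in> bitstrings_on I\<close>] decode_True[OF \<open>x_neg \<in> bitstrings_on I\<close>]
    by (intro sum_mono weighted_bias_le) (auto simp: x_neg_def)
  also have "\<dots> = - bound"
    by (simp add: bound_def sum_distrib_left sum_negf)
  finally have lower: "- (D - (\<Sum>i\<in>I. l i) / 2) \<le> - bound" .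
  from upper lower \<open>0 < bound\<close> show False
    by linarith
qed

lemma weighted_trace2_sum_eq:
  assumes "\<And>i. i \<in> I \<Longrightarrow> hermitian2 (F i)" and "hermitian2 \<rho>" and "trace2 \<rho> = 1"
    and "(\<Sum>i\<in>I. l i *\<^sub>R pauli_vector (F i)) = 0"
  shows "(\<Sum>i\<in>I. l i * Re (trace2 (F i ** \<rho>))) = (\<Sum>i\<in>I. l i * Re (trace2 (F i))) / 2"
proof -
  have "(\<Sum>i\<in>I. l i * Re (trace2 (F i ** \<rho>)))
      = (\<Sum>i\<in>I. l i * Re (trace2 (F i)) / 2 + 2 * (l i *\<^sub>R pauli_vector (F i) \<bullet> pauli_vector \<rho>))"
    using assms(1-3) by (intro sum.cong) (simp_all add: Re_trace2_mult_hermitian2 algebra_simps)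
  also have "\<dots> = (\<Sum>i\<in>I. l i * Re (trace2 (F i))) / 2
      + 2 * ((\<Sum>i\<in>I. l i *\<^sub>R pauli_vector (F i)) \<bullet> pauli_vector \<rho>)"
    by (simp add: sum.distrib sum_divide_distrib inner_sum_left sum_distrib_left)
  finally show ?thesis
    using assms(4) by simp
qed

theorem theorem1:
  "\<not> (\<exists>(p::real) (\<rho>::(nat \<Rightarrow> bool) \<Rightarrow> complex^2^2) (E::nat \<Rightarrow> bool \<Rightarrow> complex^2^2).
        p > 1/2 \<and>
        (\<forall>x\<in>bitstrings4. density2 (\<rho> x)) \<and>
        (\<forall>i\<in>{1..4}. povm2 (E i False) (E i True)) \<and>
        (\<forall>x\<in>bitstrings4. \<forall>i\<in>{1..4}. Re (trace2 (E i (x i) ** \<rho> x)) \<ge> p))"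
proof
  assume "\<exists>p \<rho> E. p > 1/2 \<and> (\<forall>x\<in>bitstrings4. density2 (\<rho> x)) \<and>
        (\<forall>i\<in>{1..4}. povm2 (E i False) (E i True)) \<and>
        (\<forall>x\<in>bitstrings4. \<forall>i\<in>{1..4}. Re (trace2 (E i (x i) ** \<rho> x)) \<ge> p)"
  then obtain p \<rho> E where "1/2 < p"
    and state: "\<And>x. x \<in> bitstrings_on {1..4} \<Longrightarrow> hermitian2 (\<rho> x) \<and> trace2 (\<rho> x) = 1"
    and povm: "\<And>i. i \<in> {1..4::nat} \<Longrightarrow> hermitian2 (E i False) \<and> E i False + E i True = mat 1"
    and success: "\<And>x i. x \<in> bitstrings_on {1..4} \<Longrightarrow> i \<in> {1..4} \<Longrightarrow>
                          p \<le> Re (trace2 (E i (x i) ** \<rho> x))"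
    unfolding bitstrings4_eq_bitstrings_on density2_def povm2_def psd2_def by blast
  obtain l where "\<exists>i\<in>{1..4}. l i \<noteq> 0"
    and relation: "(\<Sum>i\<in>{1..4}. l i *\<^sub>R pauli_vector (E i False)) = 0"
    using exists_nontrivial_linear_relation
      [where I = "{1..4::nat}" and v = "\<lambda>i. pauli_vector (E i False)"] by auto
  show False
  proof (rule weighted_decoding_sum_not_constant)
    show "(\<Sum>i\<in>{1..4}. l i * Re (trace2 (E i False ** \<rho> x)))
        = (\<Sum>i\<in>{1..4}. l i * Re (trace2 (E i False))) / 2"
      if "x \<in> bitstrings_on {1..4}" for x
      using state[OF that] povm relation
      by (intro weighted_trace2_sum_eq) auto
    show "p \<le> Re (trace2 (E i False ** \<rho> x))"
      if "x \<in> bitstrings_on {1..4}" "i \<in> {1..4}" "\<not> x i" for x i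
      using success[OF that(1,2)] that(3) by simp
    show "Re (trace2 (E i False ** \<rho> x)) \<le> 1 - p"
      if "x \<in> bitstrings_on {1..4}" "i \<in> {1..4}" "x i" for x i
      using success[OF that(1,2)] that(3) povm[OF that(2)] state[OF that(1)]
        trace2_povm_complement[of "E i False" "E i True" "\<rho> x"]
      by simp
  qed (use \<open>1/2 < p\<close> \<open>\<exists>i\<in>{1..4}. l i \<noteq> 0\<close> in auto)
qed

end
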